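(* Let $k>0$. For $N\in\mathbb{N}^+$ and $h=\frac1{N+1}$, let $\mathcal{A}_h$ be the matrix defined below and $T_h(t)=e^{\mathcal{A}_ht}$ the semigroup it generates on $\mathbb{Y}_h=(\mathbb{C}^{N+1},\langle\cdot,\cdot\rangle_{\mathbb{Y}_h})$. Then the family $\{T_h(t)\}$ is uniformly exponentially stable: there exist constants $M>0$ and $\omega>0$ independent of $h$ such that $$\|T_h(t)\|\le Me^{-\omega t}\quad\text{for all }t\ge0\text{ and all such }h\in(0,1),$$ where $\|\cdot\|$ is the operator norm induced by $\langle\cdot,\cdot\rangle_{\mathbb{Y}_h}$.
   Context: Let $D_h$ be the $(N+1)\times(N+1)$ lower bidiagonal matrix with $\frac12$ on the diagonal and first subdiagonal, and $M_h$ the $(N+1)\times(N+1)$ upper bidiagonal matrix with $-\frac1h$ on the diagonal and $\frac1h$ on the first superdiagonal; $e_{N+1}=(0,\dots,0,1)^\top$. For $Y_h=(y_1,\dots,y_{N+1})^\top\in\mathbb{C}^{N+1}$ let $Z_h$ solve $D_h^\top Z_h=-M_h^\top Y_h+\tfrac{ik}2y_{N+1}e_{N+1}$ and set $\mathcal{A}_hY_h=D_h^{-1}[-iM_hZ_h-\tfrac kh y_{N+1}e_{N+1}]$. This is the order-reduction semi-discretization of the Schrödinger system $w_t=-iw_{xx}$, $w(0,t)=0$, $w_x(1,t)=-ikw(1,t)$ on $[0,1]$ with mesh size $h$. The inner product on $\mathbb{Y}_h=\mathbb{C}^{N+1}$ is $\langle Y_h,\widetilde Y_h\rangle_{\mathbb{Y}_h}=h\langle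 D_hY_h,D_h\widetilde Y_h\rangle$, with $\langle\cdot,\cdot\rangle$ the standard inner product of $\mathbb{C}^{N+1}$. *)

theory Defs
  imports "HOL-Analysis.Analysis"
begin

text \<open>Vectors of \<open>\<complex>\<^sup>N\<^sup>+\<^sup>1\<close> are functions \<open>nat \<Rightarrow> complex\<close> supported on \<open>{0..N}\<close>;
  index \<open>i\<close> corresponds to the paper's component \<open>i+1\<close>.\<close>

definition isvec :: "nat \<Rightarrow> (nat \<Rightarrow> complex) \<Rightarrow> bool" where
  "isvec N Y \<longleftrightarrow> (\<forall>i>N. Y i = 0)"

definition mesh :: "nat \<Rightarrow> real" where
  "mesh N = 1 / (real N + 1)"

definition Dmul :: "nat \<Rightarrow> (nat \<Rightarrow> complex) \<Rightarrow> (nat \<Rightarrow> complex)" where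
  "Dmul N Y i = (if i \<le> N then (Y i + (if 0 < i then Y (i - 1) else 0)) / 2 else 0)"

definition DTmul :: "nat \<Rightarrow> (nat \<Rightarrow> complex) \<Rightarrow> (nat \<Rightarrow> complex)" where
  "DTmul N Z i = (if i \<le> N then (Z i + (if i < N then Z (i + 1) else 0)) / 2 else 0)"

definition Mmul :: "nat \<Rightarrow> (nat \<Rightarrow> complex) \<Rightarrow> (nat \<Rightarrow> complex)" where
  "Mmul N Y i = (if i \<le> N then (- Y i + (if i < N then Y (i + 1) else 0)) / complex_of_real (mesh N) else 0)"

definition MTmul :: "nat \<Rightarrow> (nat \<Rightarrow> complex) \<Rightarrow> (nat \<Rightarrow> complex)" where
  "MTmul N Y i = (if i \<le> N then (- Y i + (if 0 < i then Y (i - 1) else 0)) / complex_of_real (mesh N) else 0)"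

definition Zsol :: "real \<Rightarrow> nat \<Rightarrow> (nat \<Rightarrow> complex) \<Rightarrow> (nat \<Rightarrow> complex)" where
  "Zsol k N Y = (THE Z. isvec N Z \<and>
     DTmul N Z = (\<lambda>i. - MTmul N Y i + (if i = N then \<i> * complex_of_real k / 2 * Y N else 0)))"

definition Aop :: "real \<Rightarrow> nat \<Rightarrow> (nat \<Rightarrow> complex) \<Rightarrow> (nat \<Rightarrow> complex)" where
  "Aop k N Y = (THE W. isvec N W \<and>
     Dmul N W = (\<lambda>i. - \<i> * Mmul N (Zsol k N Y) i
        - (if i = N then complex_of_real (k / mesh N) * Y N else 0)))"

definition Tsg :: "real \<Rightarrow> nat \<Rightarrow> real \<Rightarrow> (nat \<Rightarrow> complex) \<Rightarrow> (nat \<Rightarrow> complex)" where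
  "Tsg k N t Y = (\<lambda>i. \<Sum>n. complex_of_real (t ^ n / fact n) * ((Aop k N ^^ n) Y) i)"

definition normY :: "nat \<Rightarrow> (nat \<Rightarrow> complex) \<Rightarrow> real" where
  "normY N Y = sqrt (mesh N * (\<Sum>i\<le>N. (cmod (Dmul N Y i))\<^sup>2))"

definition opnormY :: "nat \<Rightarrow> ((nat \<Rightarrow> complex) \<Rightarrow> (nat \<Rightarrow> complex)) \<Rightarrow> real" where
  "opnormY N L = Sup {normY N (L Y) | Y. isvec N Y \<and> normY N Y \<le> 1}"

end

(*
  Write u = D_h y for the cell averages of y and extend Z_h by z_(N+1) = -ik y_N. Then
  D_h (A_h y)_i = -i (z_(i+1) - z_i) / h, where (z_i + z_(i+1)) / 2 = (y_i - y_(i-1)) / h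
  for every i <= N. A discrete Leibniz rule for midpoint averages turns the energy
  E = h sum_i |u_i|^2 = ||y||^2 into dE/dt = -2k |y_N|^2. The same summation by parts,
  applied to the multiplier P = Re (i h sum_i x_(i+1/2) V_(i+1/2) conj u_i), where V is
  the discrete primitive of u from the right end, gives dP/dt >= E - (k^2/2 + 2) |y_N|^2,
  while |P| <= E. No constant depends on h, so for eps small (depending only on k) the
  functional E - eps P is equivalent to E and decays at the rate 2 eps / 3, uniformly in h.
*)

theory Submission
  imports Defs
begin

section \<open>The discrete generator\<close>

text \<open>\<open>prev y 0 = 0\<close> is the Dirichlet condition \<open>w(0) = 0\<close>.\<close>

definition prev :: "(nat \<Rightarrow> complex) \<Rightarrow> nat \<Rightarrow> complex" where
  "prev y i = (if i = 0 then 0 else y (i - 1))"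

lemma prev_0 [simp]: "prev y 0 = 0"
  and prev_Suc [simp]: "prev y (Suc i) = y i"
  by (simp_all add: prev_def)

definition avg :: "(nat \<Rightarrow> complex) \<Rightarrow> nat \<Rightarrow> complex" where
  "avg y i = (y i + prev y i) / 2"

definition diffq :: "real \<Rightarrow> (nat \<Rightarrow> complex) \<Rightarrow> nat \<Rightarrow> complex" where
  "diffq h y i = (y i - prev y i) / of_real h"

definition rate :: "real \<Rightarrow> (nat \<Rightarrow> complex) \<Rightarrow> nat \<Rightarrow> complex" where
  "rate h z i = - \<i> * (z (Suc i) - z i) / of_real h"

lemma mesh_pos: "0 < mesh N"
  unfolding mesh_def by simp

lemma Dmul_eq_avg: "i \<le> N \<Longrightarrow> Dmul N y i = avg y i"
  by (simp add: Dmul_def avg_def prev_def)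

lemma MTmul_eq_diffq: "i \<le> N \<Longrightarrow> MTmul N y i = - diffq (mesh N) y i"
  by (simp add: MTmul_def diffq_def prev_def diff_divide_distrib)

lemma Dmul_injective:
  assumes "isvec N W" "isvec N W'" "Dmul N W = Dmul N W'"
  shows "W = W'"
proof
  fix i show "W i = W' i"
  proof (induction i)
    case 0
    show ?case using fun_cong[OF assms(3), of 0] by (simp add: Dmul_def)
  next
    case (Suc i)
    then show ?case using fun_cong[OF assms(3), of "Suc i"] assms(1,2)
      by (cases "Suc i \<le> N") (auto simp: Dmul_def isvec_def)
  qed
qed

lemma DTmul_injective:
  assumes "isvec N Z" "isvec N Z'" "DTmul N Z = DTmul N Z'"
  shows "Z = Z'"
proof
  fix i show "Z i = Z' i"
  proof (cases "i \<le> N")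
    case True
    then show ?thesis
    proof (induction rule: inc_induct)
      case base
      show ?case using fun_cong[OF assms(3), of N] by (simp add: DTmul_def)
    next
      case (step n)
      then show ?case using fun_cong[OF assms(3), of n] by (simp add: DTmul_def)
    qed
  next
    case False
    then show ?thesis using assms(1,2) by (simp add: isvec_def)
  qed
qed

primrec forward_solve :: "(nat \<Rightarrow> complex) \<Rightarrow> nat \<Rightarrow> complex" where
  "forward_solve r 0 = 2 * r 0"
| "forward_solve r (Suc i) = 2 * r (Suc i) - forward_solve r i"

lemma Dmul_solvable:
  assumes "\<And>i. N < i \<Longrightarrow> r i = 0"
  shows "\<exists>!W. isvec N W \<and> Dmul N W = r"
proof
  define W where "W i = (if i \<le> N then forward_solve r i else 0)" for i
  show "isvec N W \<and> Dmul N W = r"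
  proof
    show "isvec N W" by (simp add: W_def isvec_def)
    show "Dmul N W = r"
    proof
      fix i show "Dmul N W i = r i"
        using assms[of i] by (cases i) (auto simp: Dmul_def W_def)
    qed
  qed
  then show "\<And>W'. isvec N W' \<and> Dmul N W' = r \<Longrightarrow> W' = W"
    using Dmul_injective by blast
qed

text \<open>The flux \<open>z\<close> is \<open>Z\<^sub>h\<close> extended by \<open>z\<^sub>N\<^sub>+\<^sub>1 = -ik y\<^sub>N\<close>, the boundary condition
  \<open>w\<^sub>x(1) = -ik w(1)\<close>; then \<open>(z\<^sub>i + z\<^sub>i\<^sub>+\<^sub>1)/2 = (y\<^sub>i - y\<^sub>i\<^sub>-\<^sub>1)/h\<close> holds for all \<open>i \<le> N\<close>, and \<open>z\<close>
  is computed downwards from \<open>N + 1\<close>.\<close>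

primrec flux_down :: "real \<Rightarrow> nat \<Rightarrow> (nat \<Rightarrow> complex) \<Rightarrow> nat \<Rightarrow> complex" where
  "flux_down k N y 0 = - \<i> * of_real k * y N"
| "flux_down k N y (Suc m) = 2 * diffq (mesh N) y (N - m) - flux_down k N y m"

definition flux :: "real \<Rightarrow> nat \<Rightarrow> (nat \<Rightarrow> complex) \<Rightarrow> nat \<Rightarrow> complex" where
  "flux k N y i = flux_down k N y (Suc N - i)"

lemma flux_boundary: "flux k N y (Suc N) = - \<i> * of_real k * y N"
  by (simp add: flux_def)

lemma flux_avg: "i \<le> N \<Longrightarrow> (flux k N y i + flux k N y (Suc i)) / 2 = diffq (mesh N) y i"
proof -
  assume "i \<le> N"
  then have "Suc N - i = Suc (N - i)" "N - (N - i) = i" by simp_all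
  then show ?thesis by (simp add: flux_def)
qed

lemma Zsol_eq: "Zsol k N y = (\<lambda>i. if i \<le> N then flux k N y i else 0)"
  unfolding Zsol_def
proof (rule the1_equality)
  let ?Z = "\<lambda>i. if i \<le> N then flux k N y i else 0"
  have "DTmul N ?Z i = - MTmul N y i + (if i = N then \<i> * of_real k / 2 * y N else 0)" for i
  proof -
    consider "i < N" | "i = N" | "N < i" by linarith
    then show ?thesis
    proof cases
      case 1
      then show ?thesis using flux_avg[of i N k y] by (simp add: DTmul_def MTmul_eq_diffq)
    next
      case 2
      have "flux k N y N = 2 * diffq (mesh N) y N + \<i> * of_real k * y N"
        using flux_avg[of N N k y] flux_boundary[of k N y] by (simp add: field_simps)
      then show ?thesis using 2 by (simp add: DTmul_def MTmul_eq_diffq add_divide_distrib)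
    next
      case 3
      then show ?thesis by (simp add: DTmul_def MTmul_def)
    qed
  qed
  then show "isvec N ?Z \<and> DTmul N ?Z = (\<lambda>i. - MTmul N y i + (if i = N then \<i> * of_real k / 2 * y N else 0))"
    by (auto simp: isvec_def)
  then show "\<exists>!Z. isvec N Z \<and> DTmul N Z = (\<lambda>i. - MTmul N y i + (if i = N then \<i> * of_real k / 2 * y N else 0))"
    using DTmul_injective by (intro ex1I) auto
qed

lemma Aop_rhs_eq:
  "(\<lambda>i. - \<i> * Mmul N (Zsol k N y) i - (if i = N then of_real (k / mesh N) * y N else 0))
   = (\<lambda>i. if i \<le> N then rate (mesh N) (flux k N y) i else 0)"
proof
  fix i
  consider "i < N" | "i = N" | "N < i" by linarith
  then show "- \<i> * Mmul N (Zsol k N y) i - (if i = N then of_real (k / mesh N) * y N else 0)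
      = (if i \<le> N then rate (mesh N) (flux k N y) i else 0)"
  proof cases
    case 1
    then show ?thesis by (simp add: Mmul_def Zsol_eq rate_def algebra_simps)
  next
    case 2
    then show ?thesis
      by (simp add: Mmul_def Zsol_eq rate_def flux_boundary diff_divide_distrib algebra_simps)
  next
    case 3
    then show ?thesis by (simp add: Mmul_def)
  qed
qed

lemma Aop_char:
  "isvec N (Aop k N y) \<and> Dmul N (Aop k N y) = (\<lambda>i. if i \<le> N then rate (mesh N) (flux k N y) i else 0)"
proof -
  have "\<exists>!W. isvec N W \<and> Dmul N W = (\<lambda>i. if i \<le> N then rate (mesh N) (flux k N y) i else 0)"
    by (rule Dmul_solvable) simp
  from theI'[OF this] show ?thesis unfolding Aop_def Aop_rhs_eq .
qed

lemma isvec_Aop: "isvec N (Aop k N y)"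
  using Aop_char by blast

lemma Dmul_Aop: "i \<le> N \<Longrightarrow> Dmul N (Aop k N y) i = rate (mesh N) (flux k N y) i"
  using Aop_char[of N k y] by simp

definition basis_vec :: "nat \<Rightarrow> nat \<Rightarrow> complex" where
  "basis_vec j i = (if i = j then 1 else 0)"

lemma isvec_expansion:
  assumes "isvec N X"
  shows "X = (\<lambda>i. \<Sum>j\<le>N. X j * basis_vec j i)"
proof
  fix i
  have "(\<Sum>j\<le>N. X j * basis_vec j i) = (\<Sum>j\<le>N. if j = i then X i else 0)"
    by (rule sum.cong) (auto simp: basis_vec_def)
  then show "X i = (\<Sum>j\<le>N. X j * basis_vec j i)"
    using assms by (simp add: isvec_def)
qed

lemma isvec_sum: "(\<And>j. j \<in> J \<Longrightarrow> isvec N (V j)) \<Longrightarrow> isvec N (\<lambda>i. \<Sum>j\<in>J. c j * V j i)"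
  by (simp add: isvec_def)

lemma Dmul_sum:
  "finite J \<Longrightarrow> Dmul N (\<lambda>i. \<Sum>j\<in>J. c j * V j i) i = (\<Sum>j\<in>J. c j * Dmul N (V j) i)"
  by (cases "0 < i") (simp_all add: Dmul_def sum.distrib[symmetric] distrib_left sum_divide_distrib)

lemma diffq_sum:
  "finite J \<Longrightarrow> diffq h (\<lambda>i. \<Sum>j\<in>J. c j * V j i) i = (\<Sum>j\<in>J. c j * diffq h (V j) i)"
  by (simp add: diffq_def prev_def sum_subtractf[symmetric] right_diff_distrib sum_divide_distrib)

lemma rate_sum:
  "finite J \<Longrightarrow> rate h (\<lambda>i. \<Sum>j\<in>J. c j * Z j i) i = (\<Sum>j\<in>J. c j * rate h (Z j) i)"
  by (simp add: rate_def sum_subtractf[symmetric] right_diff_distrib sum_divide_distrib sum_distrib_left mult_ac)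

lemma flux_sum:
  assumes "finite J"
  shows "flux k N (\<lambda>i. \<Sum>j\<in>J. c j * V j i) = (\<lambda>i. \<Sum>j\<in>J. c j * flux k N (V j) i)"
proof -
  have "flux_down k N (\<lambda>i. \<Sum>j\<in>J. c j * V j i) m = (\<Sum>j\<in>J. c j * flux_down k N (V j) m)" for m
  proof (induction m)
    case 0
    show ?case by (simp add: sum_distrib_left mult_ac)
  next
    case (Suc m)
    then show ?case
      by (simp add: diffq_sum[OF assms] sum_subtractf[symmetric] right_diff_distrib sum_distrib_left mult_ac)
  qed
  then show ?thesis by (simp add: flux_def fun_eq_iff)
qed

lemma Aop_sum:
  assumes "finite J"
  shows "Aop k N (\<lambda>i. \<Sum>j\<in>J. c j * V j i) = (\<lambda>i. \<Sum>j\<in>J. c j * Aop k N (V j) i)"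
proof (rule Dmul_injective)
  show "isvec N (Aop k N (\<lambda>i. \<Sum>j\<in>J. c j * V j i))" "isvec N (\<lambda>i. \<Sum>j\<in>J. c j * Aop k N (V j) i)"
    by (simp_all add: isvec_Aop isvec_sum)
  show "Dmul N (Aop k N (\<lambda>i. \<Sum>j\<in>J. c j * V j i)) = Dmul N (\<lambda>i. \<Sum>j\<in>J. c j * Aop k N (V j) i)"
  proof
    fix i
    show "Dmul N (Aop k N (\<lambda>i. \<Sum>j\<in>J. c j * V j i)) i = Dmul N (\<lambda>i. \<Sum>j\<in>J. c j * Aop k N (V j) i) i"
      by (cases "i \<le> N") (simp_all add: Dmul_sum[OF assms] Dmul_Aop flux_sum[OF assms] rate_sum[OF assms],
          simp add: Dmul_def)
  qed
qed

lemma Aop_matrix: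
  "isvec N X \<Longrightarrow> Aop k N X = (\<lambda>i. \<Sum>j\<le>N. Aop k N (basis_vec j) i * X j)"
  using Aop_sum[of "{..N}" k N X basis_vec] isvec_expansion[of N X] by (simp add: mult.commute)

section \<open>Exponential series of a matrix operator\<close>

definition exp_series ::
  "((nat \<Rightarrow> complex) \<Rightarrow> nat \<Rightarrow> complex) \<Rightarrow> real \<Rightarrow> (nat \<Rightarrow> complex) \<Rightarrow> nat \<Rightarrow> complex" where
  "exp_series L t Y = (\<lambda>i. \<Sum>n. of_real (t ^ n / fact n) * (L ^^ n) Y i)"

lemma exp_series_powser: "exp_series L t Y i = (\<Sum>n. (L ^^ n) Y i / fact n * of_real t ^ n)"
  by (simp add: exp_series_def of_real_divide of_real_power mult_ac)

lemma exp_series_0: "exp_series L 0 Y = Y"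
proof
  fix i
  show "exp_series L 0 Y i = Y i"
    using powser_zero[of "\<lambda>n. (L ^^ n) Y i / fact n"] by (simp add: exp_series_powser)
qed

definition norm1 :: "nat \<Rightarrow> (nat \<Rightarrow> complex) \<Rightarrow> real" where
  "norm1 N X = (\<Sum>i\<le>N. cmod (X i))"

lemma norm_le_norm1: "isvec N X \<Longrightarrow> cmod (X i) \<le> norm1 N X"
  unfolding norm1_def isvec_def
  by (cases "i \<le> N") (auto intro: member_le_sum sum_nonneg)

context
  fixes N :: nat and L :: "(nat \<Rightarrow> complex) \<Rightarrow> nat \<Rightarrow> complex" and a :: "nat \<Rightarrow> nat \<Rightarrow> complex"
  assumes matrix: "\<And>X. isvec N X \<Longrightarrow> L X = (\<lambda>i. \<Sum>j\<le>N. a i j * X j)"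
    and isvec_L: "\<And>X. isvec N X \<Longrightarrow> isvec N (L X)"
begin

lemma isvec_funpow: "isvec N Y \<Longrightarrow> isvec N ((L ^^ n) Y)"
  by (induction n) (simp_all add: isvec_L)

lemma norm1_le:
  assumes "isvec N X"
  shows "norm1 N (L X) \<le> (\<Sum>i\<le>N. \<Sum>j\<le>N. cmod (a i j)) * norm1 N X"
proof -
  have "norm1 N (L X) \<le> (\<Sum>i\<le>N. \<Sum>j\<le>N. cmod (a i j) * cmod (X j))"
    unfolding norm1_def matrix[OF assms]
    by (intro sum_mono order_trans[OF norm_sum]) (simp add: norm_mult)
  also have "\<dots> \<le> (\<Sum>i\<le>N. \<Sum>j\<le>N. cmod (a i j) * norm1 N X)"
    by (intro sum_mono mult_left_mono norm_le_norm1[OF assms]) simp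
  finally show ?thesis by (simp add: sum_distrib_right)
qed

lemma norm1_funpow_le:
  "isvec N X \<Longrightarrow> norm1 N ((L ^^ n) X) \<le> (\<Sum>i\<le>N. \<Sum>j\<le>N. cmod (a i j)) ^ n * norm1 N X"
proof (induction n)
  case (Suc n)
  have "norm1 N ((L ^^ Suc n) X) \<le> (\<Sum>i\<le>N. \<Sum>j\<le>N. cmod (a i j)) * norm1 N ((L ^^ n) X)"
    using norm1_le[OF isvec_funpow[OF Suc.prems]] by simp
  also have "\<dots> \<le> (\<Sum>i\<le>N. \<Sum>j\<le>N. cmod (a i j)) * ((\<Sum>i\<le>N. \<Sum>j\<le>N. cmod (a i j)) ^ n * norm1 N X)"
    by (intro mult_left_mono Suc.IH[OF Suc.prems]) (simp add: sum_nonneg)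
  finally show ?case by (simp add: mult.assoc)
qed simp

lemma summable_exp_series_powser:
  assumes "isvec N Y"
  shows "summable (\<lambda>n. (L ^^ n) Y i / fact n * z ^ n)"
proof (rule summable_comparison_test')
  define K where "K = (\<Sum>i\<le>N. \<Sum>j\<le>N. cmod (a i j))"
  show "summable (\<lambda>n. norm1 N Y * (inverse (fact n) * (K * cmod z) ^ n))"
    by (intro summable_mult summable_exp)
  fix n
  have "cmod ((L ^^ n) Y i) \<le> K ^ n * norm1 N Y"
    using norm_le_norm1[OF isvec_funpow[OF assms]] norm1_funpow_le[OF assms] unfolding K_def
    by (rule order_trans)
  then have "cmod ((L ^^ n) Y i) * cmod z ^ n / fact n \<le> K ^ n * norm1 N Y * cmod z ^ n / fact n"
    by (intro divide_right_mono mult_right_mono) auto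
  then show "cmod ((L ^^ n) Y i / fact n * z ^ n) \<le> norm1 N Y * (inverse (fact n) * (K * cmod z) ^ n)"
    by (simp add: norm_mult norm_divide norm_power power_mult_distrib field_simps)
qed

lemma isvec_exp_series: "isvec N Y \<Longrightarrow> isvec N (exp_series L t Y)"
  using isvec_funpow by (simp add: isvec_def exp_series_def)

lemma exp_series_has_vector_derivative:
  assumes "isvec N Y"
  shows "((\<lambda>t. exp_series L t Y i) has_vector_derivative L (exp_series L t Y) i) (at t)"
proof -
  define c where "c j n = (L ^^ n) Y j / fact n" for j n
  have summable: "summable (\<lambda>n. c j n * z ^ n)" for j z
    unfolding c_def by (rule summable_exp_series_powser[OF assms])
  have "diffs (c i) n = (\<Sum>j\<le>N. a i j * c j n)" for n
  proof -
    have "diffs (c i) n = L ((L ^^ n) Y) i / fact n"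
      by (simp add: diffs_def c_def divide_simps del: of_nat_Suc)
    then show ?thesis
      by (simp add: matrix[OF isvec_funpow[OF assms]] c_def sum_divide_distrib)
  qed
  then have "(\<Sum>n. diffs (c i) n * z ^ n) = (\<Sum>j\<le>N. a i j * (\<Sum>n. c j n * z ^ n))" for z
    using summable
    by (simp add: sum_distrib_right suminf_sum[symmetric] suminf_mult[symmetric] summable_mult mult.assoc)
  also have "(\<Sum>j\<le>N. a i j * (\<Sum>n. c j n * of_real t ^ n)) = L (exp_series L t Y) i"
    by (simp add: matrix[OF isvec_exp_series[OF assms]] exp_series_powser c_def)
  finally have "((\<lambda>z. \<Sum>n. c i n * z ^ n) has_field_derivative L (exp_series L t Y) i) (at (of_real t))"
    using termdiffs_strong_converges_everywhere[OF summable] by metis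
  from has_vector_derivative_real_field[OF this] show ?thesis
    by (simp add: exp_series_powser c_def)
qed

end

lemma Tsg_eq_exp_series: "Tsg k N t = exp_series (Aop k N) t"
  by (simp add: fun_eq_iff Tsg_def exp_series_def)

lemma Tsg_has_vector_derivative:
  "isvec N Y \<Longrightarrow> ((\<lambda>s. Tsg k N s Y i) has_vector_derivative Aop k N (Tsg k N t Y) i) (at t)"
  unfolding Tsg_eq_exp_series
  by (rule exp_series_has_vector_derivative[OF Aop_matrix isvec_Aop])

lemma Tsg_0: "Tsg k N 0 Y = Y"
  by (simp add: Tsg_eq_exp_series exp_series_0)

section \<open>Discrete summation by parts\<close>

lemma sum_midpoint_product_rule:
  fixes a b :: "nat \<Rightarrow> complex"
  shows "(\<Sum>i\<le>N. (a (Suc i) - a i) * cnj ((b i + b (Suc i)) / 2)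
                + (a i + a (Suc i)) / 2 * cnj (b (Suc i) - b i))
         = a (Suc N) * cnj (b (Suc N)) - a 0 * cnj (b 0)"
proof -
  have "(a (Suc i) - a i) * cnj ((b i + b (Suc i)) / 2) + (a i + a (Suc i)) / 2 * cnj (b (Suc i) - b i)
        = a (Suc i) * cnj (b (Suc i)) - a i * cnj (b i)" for i
    by (simp add: algebra_simps add_divide_distrib diff_divide_distrib)
  then show ?thesis
    using sum_lessThan_telescope[of "\<lambda>i. a i * cnj (b i)" "Suc N"] by (simp add: lessThan_Suc_atMost)
qed

lemma Re_diff_mult_cnj_avg: "Re ((q - p) * cnj ((q + p) / 2)) = ((cmod q)\<^sup>2 - (cmod p)\<^sup>2) / 2"
  unfolding cmod_power2 by (simp add: algebra_simps power2_eq_square)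

lemma Re_avg_mult_cnj_diff: "Re ((q + p) / 2 * cnj (q - p)) = ((cmod q)\<^sup>2 - (cmod p)\<^sup>2) / 2"
  unfolding cmod_power2 by (simp add: algebra_simps power2_eq_square)

lemma mult_cnj_self: "w * cnj w = (of_real (cmod w))\<^sup>2"
  by (simp flip: complex_norm_square)

lemma prev_add_diffq: "0 < h \<Longrightarrow> y i = prev y i + of_real h * diffq h y i"
  by (simp add: diffq_def)

definition tail :: "real \<Rightarrow> nat \<Rightarrow> (nat \<Rightarrow> complex) \<Rightarrow> nat \<Rightarrow> complex" where
  "tail h N w m = of_real h * (\<Sum>l = m..N. w l)"

definition tail_mid :: "real \<Rightarrow> nat \<Rightarrow> (nat \<Rightarrow> complex) \<Rightarrow> nat \<Rightarrow> complex" where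
  "tail_mid h N w i = (tail h N w i + tail h N w (Suc i)) / 2"

lemma tail_Suc_N [simp]: "tail h N w (Suc N) = 0"
  by (simp add: tail_def)

lemma tail_step: "i \<le> N \<Longrightarrow> tail h N w i = tail h N w (Suc i) + of_real h * w i"
  by (simp add: tail_def Icc_eq_insert_lb_nat algebra_simps)

definition node_mid :: "real \<Rightarrow> nat \<Rightarrow> real" where
  "node_mid h i = (real i + 1/2) * h"

text \<open>The multiplier discretises \<open>i \<integral>\<^sub>0\<^sup>1 x (\<integral>\<^sub>x\<^sup>1 w\<^sub>1) conj w\<^sub>2 dx\<close>: \<open>tail h N w m\<close> approximates
  \<open>\<integral>\<^sub>x\<^sub>m\<^sup>1 w\<close>, and the integrand is sampled at the cell midpoints \<open>node_mid h i\<close>.\<close>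

definition multiplier :: "real \<Rightarrow> nat \<Rightarrow> (nat \<Rightarrow> complex) \<Rightarrow> (nat \<Rightarrow> complex) \<Rightarrow> complex" where
  "multiplier h N w1 w2 = \<i> * of_real h * (\<Sum>i\<le>N. of_real (node_mid h i) * tail_mid h N w1 i * cnj (w2 i))"

lemma multiplier_rate_right:
  assumes "0 < h"
  shows "multiplier h N w (rate h z)
         = - (\<Sum>i\<le>N. of_real (node_mid h i) * tail_mid h N w i * cnj (z (Suc i) - z i))"
proof -
  have "\<i> * of_real h * (X * cnj (rate h z i)) = - (X * cnj (z (Suc i) - z i))" for X i
  proof -
    have rate: "of_real h * cnj (rate h z i) = \<i> * cnj (z (Suc i) - z i)"
      using assms by (simp add: rate_def)
    have "\<i> * of_real h * (X * cnj (rate h z i)) = X * (\<i> * (of_real h * cnj (rate h z i)))"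
      by (simp only: mult_ac)
    also have "\<dots> = X * (\<i> * (\<i> * cnj (z (Suc i) - z i)))"
      unfolding rate ..
    finally show ?thesis
      by (simp only: complex_i_mult_minus mult_minus_right)
  qed
  then show ?thesis
    unfolding multiplier_def sum_distrib_left sum_negf[symmetric] by simp
qed

lemma multiplier_cong:
  assumes "\<And>i. i \<le> N \<Longrightarrow> w1 i = w1' i" "\<And>i. i \<le> N \<Longrightarrow> w2 i = w2' i"
  shows "multiplier h N w1 w2 = multiplier h N w1' w2'"
proof -
  have "tail h N w1 m = tail h N w1' m" for m
    unfolding tail_def using assms(1) by (intro arg_cong[where f = "(*) _"] sum.cong) auto
  then show ?thesis
    unfolding multiplier_def tail_mid_def using assms(2) by (intro arg_cong[where f = "(*) _"] sum.cong) auto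
qed

lemma sum_tail_mid_avg_mult_cnj_diff:
  "(\<Sum>i\<le>N. tail_mid h N (avg y) i * cnj (y i - prev y i)) = of_real h * (\<Sum>i\<le>N. avg y i * cnj (avg y i))"
proof -
  let ?v = "tail h N (avg y)"
  have "(\<Sum>i\<le>N. tail_mid h N (avg y) i * cnj (y i - prev y i) - of_real h * (avg y i * cnj (avg y i)))
      = (\<Sum>i\<le>N. (?v (Suc i) - ?v i) * cnj ((prev y i + prev y (Suc i)) / 2)
                 + (?v i + ?v (Suc i)) / 2 * cnj (prev y (Suc i) - prev y i))"
  proof (rule sum.cong[OF refl])
    fix i assume "i \<in> {..N}"
    then show "tail_mid h N (avg y) i * cnj (y i - prev y i) - of_real h * (avg y i * cnj (avg y i))
      = (?v (Suc i) - ?v i) * cnj ((prev y i + prev y (Suc i)) / 2)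
        + (?v i + ?v (Suc i)) / 2 * cnj (prev y (Suc i) - prev y i)"
      using tail_step[of i N h "avg y"] by (simp add: tail_mid_def avg_def add.commute)
  qed
  also have "\<dots> = 0"
    by (subst sum_midpoint_product_rule) simp
  finally show ?thesis
    by (simp add: sum_subtractf sum_distrib_left)
qed

locale discrete_flux =
  fixes h k :: real and N :: nat and y z :: "nat \<Rightarrow> complex"
  assumes h_pos: "0 < h"
    and z_avg: "\<And>i. i \<le> N \<Longrightarrow> (z i + z (Suc i)) / 2 = diffq h y i"
    and z_boundary: "z (Suc N) = - \<i> * of_real k * y N"
begin

lemma sum_flux_diff_avg:
  "(\<Sum>i\<le>N. (z (Suc i) - z i) * cnj (avg y i))
   = z (Suc N) * cnj (y N) - of_real h * of_real (\<Sum>i\<le>N. (cmod (diffq h y i))\<^sup>2)"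
proof -
  have "(\<Sum>i\<le>N. (z (Suc i) - z i) * cnj (avg y i) + of_real h * of_real ((cmod (diffq h y i))\<^sup>2))
      = (\<Sum>i\<le>N. (z (Suc i) - z i) * cnj ((prev y i + prev y (Suc i)) / 2)
                 + (z i + z (Suc i)) / 2 * cnj (prev y (Suc i) - prev y i))"
  proof (rule sum.cong[OF refl])
    fix i assume "i \<in> {..N}"
    then have "(z i + z (Suc i)) / 2 * cnj (prev y (Suc i) - prev y i)
        = of_real h * of_real ((cmod (diffq h y i))\<^sup>2)"
      using prev_add_diffq[OF h_pos, of y i] by (simp add: z_avg mult_cnj_self mult_ac)
    moreover have "(prev y i + prev y (Suc i)) / 2 = avg y i"
      by (simp add: avg_def add.commute)
    ultimately show "(z (Suc i) - z i) * cnj (avg y i) + of_real h * of_real ((cmod (diffq h y i))\<^sup>2)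
      = (z (Suc i) - z i) * cnj ((prev y i + prev y (Suc i)) / 2)
        + (z i + z (Suc i)) / 2 * cnj (prev y (Suc i) - prev y i)"
      by simp
  qed
  also have "\<dots> = z (Suc N) * cnj (y N)"
    by (subst sum_midpoint_product_rule) simp
  finally show ?thesis
    by (simp add: sum.distrib sum_distrib_left eq_diff_eq)
qed

lemma energy_dissipation:
  "Re (of_real h * (\<Sum>i\<le>N. rate h z i * cnj (avg y i))) = - k * (cmod (y N))\<^sup>2"
proof -
  have "of_real h * (\<Sum>i\<le>N. rate h z i * cnj (avg y i)) = - \<i> * (\<Sum>i\<le>N. (z (Suc i) - z i) * cnj (avg y i))"
    using h_pos by (simp add: rate_def sum_distrib_left mult.assoc)
  then show ?thesis
    by (simp add: sum_flux_diff_avg z_boundary mult.assoc mult_cnj_self)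
qed

lemma tail_rate: "m \<le> Suc N \<Longrightarrow> tail h N (rate h z) m = - \<i> * (z (Suc N) - z m)"
proof -
  assume "m \<le> Suc N"
  have "tail h N (rate h z) m = - \<i> * (\<Sum>l = m..N. z (Suc l) - z l)"
    using h_pos by (simp add: tail_def rate_def sum_distrib_left sum_divide_distrib[symmetric])
  also have "\<dots> = - \<i> * (z (Suc N) - z m)"
    using \<open>m \<le> Suc N\<close> by (simp add: sum_Suc_diff)
  finally show ?thesis .
qed

lemma tail_mid_rate: "i \<le> N \<Longrightarrow> tail_mid h N (rate h z) i = - of_real k * y N + \<i> * diffq h y i"
proof -
  assume i: "i \<le> N"
  then have "tail_mid h N (rate h z) i = - \<i> * z (Suc N) + \<i> * ((z i + z (Suc i)) / 2)"
    by (simp add: tail_mid_def tail_rate algebra_simps add_divide_distrib diff_divide_distrib)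
  then show ?thesis
    using i by (simp add: z_avg z_boundary mult.assoc)
qed

lemma multiplier_rate_avg:
  "Re (multiplier h N (rate h z) (avg y))
   = Re (\<i> * of_real h * (- of_real k * y N) * (\<Sum>i\<le>N. of_real (node_mid h i) * cnj (avg y i)))
     - (\<Sum>i\<le>N. node_mid h i * ((cmod (y i))\<^sup>2 - (cmod (prev y i))\<^sup>2)) / 2"
proof -
  have "\<i> * of_real h * (of_real (node_mid h i) * tail_mid h N (rate h z) i * cnj (avg y i))
      = \<i> * of_real h * (- of_real k * y N) * (of_real (node_mid h i) * cnj (avg y i))
        - of_real (node_mid h i) * ((y i - prev y i) * cnj ((y i + prev y i) / 2))" if "i \<le> N" for i
    using h_pos by (simp add: tail_mid_rate[OF that] diffq_def avg_def field_simps)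
  then have decomposition: "multiplier h N (rate h z) (avg y)
      = \<i> * of_real h * (- of_real k * y N) * (\<Sum>i\<le>N. of_real (node_mid h i) * cnj (avg y i))
        - (\<Sum>i\<le>N. of_real (node_mid h i) * ((y i - prev y i) * cnj ((y i + prev y i) / 2)))"
    unfolding multiplier_def sum_distrib_left sum_subtractf[symmetric] by (intro sum.cong) simp_all
  have "Re (of_real (node_mid h i) * ((y i - prev y i) * cnj ((y i + prev y i) / 2)))
      = node_mid h i * ((cmod (y i))\<^sup>2 - (cmod (prev y i))\<^sup>2) / 2" for i
    using Re_diff_mult_cnj_avg[of "y i" "prev y i"] by simp
  then show ?thesis
    by (simp only: decomposition minus_complex.sel Re_sum sum_divide_distrib)
qed

text \<open>Summation by parts against \<open>x\<^sub>i V\<^sub>i\<close>, the grid version of \<open>x \<integral>\<^sub>x\<^sup>1 u\<close>; the midpoint weights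
  cost the remainder \<open>h\<^sup>2/4\<close>.\<close>

lemma sum_weighted_tail_mid_mult_cnj_flux_diff:
  "(\<Sum>i\<le>N. of_real (node_mid h i) * tail_mid h N (avg y) i * cnj (z (Suc i) - z i))
   + (\<Sum>i\<le>N. (of_real h * tail_mid h N (avg y) i - of_real h * of_real (node_mid h i) * avg y i)
               * cnj (diffq h y i))
   = of_real (h\<^sup>2 / 4) * (\<Sum>i\<le>N. avg y i * cnj (z (Suc i) - z i))"
proof -
  let ?v = "tail h N (avg y)"
  define a where "a i = of_real (real i * h) * ?v i" for i
  have "(\<Sum>i\<le>N. of_real (node_mid h i) * tail_mid h N (avg y) i * cnj (z (Suc i) - z i)
              + (of_real h * tail_mid h N (avg y) i - of_real h * of_real (node_mid h i) * avg y i)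
                * cnj (diffq h y i)
              - of_real (h\<^sup>2 / 4) * (avg y i * cnj (z (Suc i) - z i)))
      = (\<Sum>i\<le>N. (a (Suc i) - a i) * cnj ((z i + z (Suc i)) / 2)
                 + (a i + a (Suc i)) / 2 * cnj (z (Suc i) - z i))"
  proof (rule sum.cong[OF refl])
    fix i assume "i \<in> {..N}"
    then have i: "i \<le> N" by simp
    show "of_real (node_mid h i) * tail_mid h N (avg y) i * cnj (z (Suc i) - z i)
        + (of_real h * tail_mid h N (avg y) i - of_real h * of_real (node_mid h i) * avg y i)
          * cnj (diffq h y i)
        - of_real (h\<^sup>2 / 4) * (avg y i * cnj (z (Suc i) - z i))
      = (a (Suc i) - a i) * cnj ((z i + z (Suc i)) / 2) + (a i + a (Suc i)) / 2 * cnj (z (Suc i) - z i)"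
      unfolding z_avg[OF i] a_def tail_mid_def tail_step[OF i, of h "avg y"] node_mid_def
      by (simp add: field_simps power2_eq_square)
  qed
  also have "\<dots> = 0"
    by (subst sum_midpoint_product_rule) (simp add: a_def)
  finally show ?thesis
    by (simp only: sum.distrib sum_subtractf right_minus_eq sum_distrib_left)
qed

lemma multiplier_avg_rate_eq:
  "multiplier h N (avg y) (rate h z)
   = of_real h * (\<Sum>i\<le>N. avg y i * cnj (avg y i))
     - (\<Sum>i\<le>N. of_real (node_mid h i) * ((y i + prev y i) / 2 * cnj (y i - prev y i)))
     - of_real (h\<^sup>2 / 4) * cnj (\<Sum>i\<le>N. (z (Suc i) - z i) * cnj (avg y i))"
proof -
  have "- X = Y - Z" if "X + Y = Z" for X Y Z :: complex
    using that by auto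
  note sum_by_parts = this[OF sum_weighted_tail_mid_mult_cnj_flux_diff]
  have hd: "of_real h * cnj (diffq h y i) = cnj (y i - prev y i)" for i
    using h_pos by (simp add: diffq_def)
  have "(of_real h * tail_mid h N (avg y) i - of_real h * of_real (node_mid h i) * avg y i) * cnj (diffq h y i)
      = tail_mid h N (avg y) i * (of_real h * cnj (diffq h y i))
        - of_real (node_mid h i) * (avg y i * (of_real h * cnj (diffq h y i)))" for i
    by (simp only: left_diff_distrib right_diff_distrib mult_ac)
  then have "(of_real h * tail_mid h N (avg y) i - of_real h * of_real (node_mid h i) * avg y i)
        * cnj (diffq h y i)
      = tail_mid h N (avg y) i * cnj (y i - prev y i)
        - of_real (node_mid h i) * ((y i + prev y i) / 2 * cnj (y i - prev y i))" for i
    by (simp only: hd avg_def)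
  moreover have "(\<Sum>i\<le>N. avg y i * cnj (z (Suc i) - z i)) = cnj (\<Sum>i\<le>N. (z (Suc i) - z i) * cnj (avg y i))"
    by (simp add: mult.commute)
  ultimately show ?thesis
    using sum_by_parts
    by (simp only: multiplier_rate_right[OF h_pos] sum_subtractf sum_tail_mid_avg_mult_cnj_diff)
qed

lemma multiplier_avg_rate:
  "Re (multiplier h N (avg y) (rate h z))
   = h * (\<Sum>i\<le>N. (cmod (avg y i))\<^sup>2)
     - (\<Sum>i\<le>N. node_mid h i * ((cmod (y i))\<^sup>2 - (cmod (prev y i))\<^sup>2)) / 2
     + h ^ 3 / 4 * (\<Sum>i\<le>N. (cmod (diffq h y i))\<^sup>2)"
proof -
  have "Re (of_real h * (\<Sum>i\<le>N. avg y i * cnj (avg y i))) = h * (\<Sum>i\<le>N. (cmod (avg y i))\<^sup>2)"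
    by (simp only: complex_norm_square[symmetric] of_real_sum[symmetric] of_real_mult[symmetric]
        Re_complex_of_real)
  moreover have "Re (of_real (node_mid h i) * ((y i + prev y i) / 2 * cnj (y i - prev y i)))
      = node_mid h i * ((cmod (y i))\<^sup>2 - (cmod (prev y i))\<^sup>2) / 2" for i
    using Re_avg_mult_cnj_diff[of "y i" "prev y i"] by simp
  then have "Re (\<Sum>i\<le>N. of_real (node_mid h i) * ((y i + prev y i) / 2 * cnj (y i - prev y i)))
      = (\<Sum>i\<le>N. node_mid h i * ((cmod (y i))\<^sup>2 - (cmod (prev y i))\<^sup>2)) / 2"
    by (simp only: Re_sum sum_divide_distrib)
  moreover have "Re (of_real (h\<^sup>2 / 4) * cnj (\<Sum>i\<le>N. (z (Suc i) - z i) * cnj (avg y i)))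
      = - (h ^ 3 / 4 * (\<Sum>i\<le>N. (cmod (diffq h y i))\<^sup>2))"
  proof -
    have "z (Suc N) * cnj (y N) = \<i> * of_real (- k * (cmod (y N))\<^sup>2)"
      by (simp add: z_boundary mult.assoc mult_cnj_self)
    then show ?thesis
      by (simp add: sum_flux_diff_avg power2_eq_square power3_eq_cube)
  qed
  ultimately show ?thesis
    unfolding multiplier_avg_rate_eq minus_complex.sel by linarith
qed

end

section \<open>Energy and multiplier estimates\<close>

lemma node_mid_bounds:
  assumes "0 \<le> h" "h * (real N + 1) \<le> 1" "i \<le> N"
  shows "0 \<le> node_mid h i" "node_mid h i \<le> 1"
proof -
  show "0 \<le> node_mid h i" using assms(1) by (simp add: node_mid_def)
  have "node_mid h i \<le> h * (real N + 1)"
    using assms(1,3) by (simp add: node_mid_def mult.commute mult_left_mono)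
  then show "node_mid h i \<le> 1" using assms(2) by linarith
qed

lemma sum_node_mid_mult_diff_sq:
  "(\<Sum>i\<le>n. node_mid h i * ((cmod (y i))\<^sup>2 - (cmod (prev y i))\<^sup>2))
   = node_mid h n * (cmod (y n))\<^sup>2 - h * (\<Sum>i<n. (cmod (y i))\<^sup>2)"
  by (induction n) (simp_all add: node_mid_def algebra_simps)

lemma sum_avg_sq_le: "(\<Sum>i\<le>N. (cmod (avg y i))\<^sup>2) \<le> (\<Sum>i<N. (cmod (y i))\<^sup>2) + (cmod (y N))\<^sup>2"
proof -
  have "(cmod (avg y i))\<^sup>2 \<le> ((cmod (y i))\<^sup>2 + (cmod (prev y i))\<^sup>2) / 2" for i
  proof -
    have "cmod (avg y i) \<le> (cmod (y i) + cmod (prev y i)) / 2"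
      unfolding avg_def by (simp add: norm_triangle_ineq divide_right_mono)
    then have "(cmod (avg y i))\<^sup>2 \<le> ((cmod (y i) + cmod (prev y i)) / 2)\<^sup>2"
      by (simp add: power_mono)
    also have "\<dots> \<le> ((cmod (y i))\<^sup>2 + (cmod (prev y i))\<^sup>2) / 2"
      using sum_squares_bound[of "cmod (y i)" "cmod (prev y i)"]
      by (simp add: power2_eq_square field_simps)
    finally show ?thesis .
  qed
  then have "(\<Sum>i\<le>N. (cmod (avg y i))\<^sup>2) \<le> ((\<Sum>i\<le>N. (cmod (y i))\<^sup>2) + (\<Sum>i\<le>N. (cmod (prev y i))\<^sup>2)) / 2"
    by (simp add: sum_mono sum.distrib[symmetric] sum_divide_distrib)
  also have "\<dots> \<le> (\<Sum>i<N. (cmod (y i))\<^sup>2) + (cmod (y N))\<^sup>2"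
  proof -
    have "(\<Sum>i\<le>N. (cmod (prev y i))\<^sup>2) = (\<Sum>i<N. (cmod (y i))\<^sup>2)"
      by (simp add: sum.atMost_shift)
    moreover have "(\<Sum>i\<le>N. (cmod (y i))\<^sup>2) = (\<Sum>i<N. (cmod (y i))\<^sup>2) + (cmod (y N))\<^sup>2"
      by (simp add: lessThan_Suc_atMost[symmetric])
    ultimately show ?thesis by simp
  qed
  finally show ?thesis .
qed

lemma norm_boundary_term_le:
  assumes "0 \<le> h" "h * (real N + 1) \<le> 1"
  shows "cmod (of_real h * q * (\<Sum>i\<le>N. of_real (node_mid h i) * cnj (w i)))
         \<le> h * (\<Sum>i\<le>N. (cmod (w i))\<^sup>2) / 2 + (cmod q)\<^sup>2 / 2"
proof -
  have sum_le: "cmod (\<Sum>i\<le>N. of_real (node_mid h i) * cnj (w i)) \<le> (\<Sum>i\<le>N. cmod (w i))"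
  proof (rule order_trans[OF norm_sum sum_mono])
    fix i assume "i \<in> {..N}"
    then show "cmod (of_real (node_mid h i) * cnj (w i)) \<le> cmod (w i)"
      using node_mid_bounds[OF assms, of i] by (simp add: norm_mult mult_left_le_one_le)
  qed
  then have "cmod (of_real h * q * (\<Sum>i\<le>N. of_real (node_mid h i) * cnj (w i)))
      \<le> h * (\<Sum>i\<le>N. cmod q * cmod (w i))"
    using mult_left_mono[OF sum_le, of "h * cmod q"] assms(1)
    by (simp add: norm_mult sum_distrib_left[symmetric] mult.assoc)
  also have "\<dots> \<le> h * (\<Sum>i\<le>N. ((cmod (w i))\<^sup>2 + (cmod q)\<^sup>2) / 2)"
    using sum_squares_bound[of "cmod q" "cmod (w _)"] assms(1)
    by (intro mult_left_mono sum_mono) (simp_all add: field_simps)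
  also have "\<dots> = h * (\<Sum>i\<le>N. (cmod (w i))\<^sup>2) / 2 + h * (real N + 1) * (cmod q)\<^sup>2 / 2"
    by (simp add: sum.distrib sum_divide_distrib[symmetric] algebra_simps)
  also have "\<dots> \<le> h * (\<Sum>i\<le>N. (cmod (w i))\<^sup>2) / 2 + (cmod q)\<^sup>2 / 2"
  proof -
    have "h * (real N + 1) * (cmod q)\<^sup>2 \<le> (cmod q)\<^sup>2"
      by (rule mult_left_le_one_le) (use assms in simp_all)
    then show ?thesis by linarith
  qed
  finally show ?thesis .
qed

lemma norm_tail_mid_le:
  assumes "0 \<le> h"
  shows "cmod (tail_mid h N w i) \<le> h * (\<Sum>l\<le>N. cmod (w l))"
proof -
  have tail_le: "cmod (tail h N w m) \<le> h * (\<Sum>l\<le>N. cmod (w l))" for m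
  proof -
    have "cmod (tail h N w m) \<le> h * (\<Sum>l = m..N. cmod (w l))"
      using assms by (simp add: tail_def norm_mult mult_left_mono norm_sum)
    also have "\<dots> \<le> h * (\<Sum>l\<le>N. cmod (w l))"
      using assms by (intro mult_left_mono sum_mono2) auto
    finally show ?thesis .
  qed
  have "cmod (tail_mid h N w i) \<le> (cmod (tail h N w i) + cmod (tail h N w (Suc i))) / 2"
    unfolding tail_mid_def by (simp add: norm_triangle_ineq divide_right_mono)
  also have "\<dots> \<le> (h * (\<Sum>l\<le>N. cmod (w l)) + h * (\<Sum>l\<le>N. cmod (w l))) / 2"
    by (intro divide_right_mono add_mono tail_le) simp
  finally show ?thesis
    by simp
qed

lemma norm_multiplier_le:
  assumes "0 \<le> h" "h * (real N + 1) \<le> 1"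
  shows "cmod (multiplier h N w w) \<le> h * (\<Sum>i\<le>N. (cmod (w i))\<^sup>2)"
proof -
  define s where "s = h * (\<Sum>i\<le>N. cmod (w i))"
  have "cmod (multiplier h N w w) = h * cmod (\<Sum>i\<le>N. of_real (node_mid h i) * tail_mid h N w i * cnj (w i))"
    using assms(1) by (simp add: multiplier_def norm_mult)
  also have "\<dots> \<le> h * (\<Sum>i\<le>N. cmod (of_real (node_mid h i) * tail_mid h N w i * cnj (w i)))"
    using assms(1) by (intro mult_left_mono norm_sum)
  also have "\<dots> \<le> h * (\<Sum>i\<le>N. s * cmod (w i))"
  proof (intro mult_left_mono sum_mono)
    fix i assume "i \<in> {..N}"
    then have c: "0 \<le> node_mid h i" "node_mid h i \<le> 1"
      using node_mid_bounds[OF assms] by auto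
    have "node_mid h i * cmod (tail_mid h N w i) \<le> cmod (tail_mid h N w i)"
      by (rule mult_left_le_one_le) (simp_all add: c)
    then have "node_mid h i * cmod (tail_mid h N w i) \<le> s"
      using norm_tail_mid_le[OF assms(1), of N w i] by (simp add: s_def)
    then show "cmod (of_real (node_mid h i) * tail_mid h N w i * cnj (w i)) \<le> s * cmod (w i)"
      using c(1) by (simp add: norm_mult mult_right_mono)
  qed (use assms(1) in simp)
  also have "\<dots> = s\<^sup>2"
    by (simp add: s_def power2_eq_square sum_distrib_left mult_ac)
  also have "\<dots> \<le> h\<^sup>2 * ((\<Sum>i\<le>N. (cmod (w i))\<^sup>2) * (real N + 1))"
    using sum_squared_le_sum_of_squares[of "\<lambda>i. cmod (w i)" "{..N}"]
    unfolding s_def power_mult_distrib by (intro mult_left_mono) (simp_all add: add.commute)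
  also have "\<dots> = h * (\<Sum>i\<le>N. (cmod (w i))\<^sup>2) * (h * (real N + 1))"
    by (simp add: power2_eq_square mult_ac)
  also have "\<dots> \<le> h * (\<Sum>i\<le>N. (cmod (w i))\<^sup>2)"
    using assms by (intro mult_right_le_one_le) (simp_all add: sum_nonneg)
  finally show ?thesis .
qed

lemma (in discrete_flux) multiplier_rate_lower_bound:
  assumes grid: "h * (real N + 1) \<le> 1"
  shows "h * (\<Sum>i\<le>N. (cmod (avg y i))\<^sup>2) - (k\<^sup>2 / 2 + 2) * (cmod (y N))\<^sup>2
         \<le> Re (multiplier h N (rate h z) (avg y) + multiplier h N (avg y) (rate h z))"
proof -
  define E where "E = h * (\<Sum>i\<le>N. (cmod (avg y i))\<^sup>2)"
  define a where "a = (cmod (y N))\<^sup>2"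
  define Sl where "Sl = (\<Sum>i<N. (cmod (y i))\<^sup>2)"
  define T where "T = (\<Sum>i\<le>N. node_mid h i * ((cmod (y i))\<^sup>2 - (cmod (prev y i))\<^sup>2)) / 2"
  define B where "B = \<i> * of_real h * (- of_real k * y N) * (\<Sum>i\<le>N. of_real (node_mid h i) * cnj (avg y i))"
  have h: "0 \<le> h" "h \<le> 1"
    using h_pos grid by (simp_all add: mult_le_cancel_left1 order_trans[OF _ grid])
  have "Re (multiplier h N (rate h z) (avg y)) = Re B - T"
    unfolding B_def T_def by (rule multiplier_rate_avg)
  moreover have "E - T \<le> Re (multiplier h N (avg y) (rate h z))"
    unfolding multiplier_avg_rate E_def T_def using h_pos by (simp add: sum_nonneg)
  moreover have "2 * T = node_mid h N * a - h * Sl"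
    by (simp add: T_def a_def Sl_def sum_node_mid_mult_diff_sq)
  moreover have "- Re B \<le> E / 2 + k\<^sup>2 * a / 2"
  proof -
    have "\<bar>Re B\<bar> \<le> cmod (of_real h * (of_real k * y N) * (\<Sum>i\<le>N. of_real (node_mid h i) * cnj (avg y i)))"
      using abs_Re_le_cmod[of B] by (simp add: B_def norm_mult)
    also have "\<dots> \<le> E / 2 + k\<^sup>2 * a / 2"
      using norm_boundary_term_le[OF h(1) grid, of "of_real k * y N" "avg y"]
      by (simp add: E_def a_def norm_mult power_mult_distrib)
    finally show ?thesis by (rule abs_le_D2)
  qed
  moreover have "E \<le> h * Sl + h * a"
    using mult_left_mono[OF sum_avg_sq_le[of y N] h(1)] by (simp add: E_def Sl_def a_def algebra_simps)
  moreover have "node_mid h N * a \<le> a" "h * a \<le> a" "0 \<le> a" "0 \<le> h * Sl"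
    using node_mid_bounds[OF h(1) grid, of N] h by (simp_all add: a_def Sl_def mult_left_le_one_le sum_nonneg)
  moreover have "(k\<^sup>2 / 2 + 2) * a = k\<^sup>2 * a / 2 + 2 * a"
    by (simp add: algebra_simps)
  ultimately show ?thesis
    unfolding E_def[symmetric] a_def[symmetric] plus_complex.sel by linarith
qed

section \<open>Energy and virial along the semigroup\<close>

lemma discrete_flux_flux: "discrete_flux (mesh N) k N y (flux k N y)"
  by unfold_locales (simp_all add: mesh_pos flux_avg flux_boundary)

lemma mesh_grid: "mesh N * (real N + 1) \<le> 1"
  by (simp add: mesh_def)

definition energy :: "nat \<Rightarrow> (nat \<Rightarrow> complex) \<Rightarrow> real" where
  "energy N Y = mesh N * (\<Sum>i\<le>N. (cmod (Dmul N Y i))\<^sup>2)"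

definition virial :: "nat \<Rightarrow> (nat \<Rightarrow> complex) \<Rightarrow> real" where
  "virial N Y = Re (multiplier (mesh N) N (Dmul N Y) (Dmul N Y))"

lemma normY_eq_sqrt_energy: "normY N Y = sqrt (energy N Y)"
  by (simp add: normY_def energy_def)

lemma energy_eq_avg: "energy N Y = mesh N * (\<Sum>i\<le>N. (cmod (avg Y i))\<^sup>2)"
  by (simp add: energy_def Dmul_eq_avg)

lemma abs_virial_le_energy: "\<bar>virial N Y\<bar> \<le> energy N Y"
  unfolding virial_def energy_def
  using abs_Re_le_cmod norm_multiplier_le[OF less_imp_le[OF mesh_pos] mesh_grid]
  by (rule order_trans)

lemma Aop_energy_dissipation:
  "Re (of_real (mesh N) * (\<Sum>i\<le>N. Dmul N (Aop k N y) i * cnj (Dmul N y i))) = - k * (cmod (y N))\<^sup>2"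
proof -
  interpret discrete_flux "mesh N" k N y "flux k N y"
    by (rule discrete_flux_flux)
  show ?thesis
    using energy_dissipation by (simp add: Dmul_Aop Dmul_eq_avg[of _ _ y])
qed

lemma Aop_virial_lower_bound:
  "energy N y - (k\<^sup>2 / 2 + 2) * (cmod (y N))\<^sup>2
   \<le> Re (multiplier (mesh N) N (Dmul N (Aop k N y)) (Dmul N y)
          + multiplier (mesh N) N (Dmul N y) (Dmul N (Aop k N y)))"
proof -
  interpret discrete_flux "mesh N" k N y "flux k N y"
    by (rule discrete_flux_flux)
  have "multiplier (mesh N) N (Dmul N (Aop k N y)) (Dmul N y)
        = multiplier (mesh N) N (rate (mesh N) (flux k N y)) (avg y)"
    "multiplier (mesh N) N (Dmul N y) (Dmul N (Aop k N y))
        = multiplier (mesh N) N (avg y) (rate (mesh N) (flux k N y))"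
    by (intro multiplier_cong; simp add: Dmul_Aop Dmul_eq_avg[of _ _ y])+
  then show ?thesis
    using multiplier_rate_lower_bound[OF mesh_grid] by (simp add: energy_eq_avg)
qed

lemma has_vector_derivative_Dmul:
  assumes "\<And>i. ((\<lambda>s. X s i) has_vector_derivative X' i) (at t)"
  shows "((\<lambda>s. Dmul N (X s) i) has_vector_derivative Dmul N X' i) (at t)"
  unfolding Dmul_def
  by (auto intro!: has_vector_derivative_divide has_vector_derivative_add assms)

lemma has_vector_derivative_multiplier:
  assumes "\<And>i. ((\<lambda>s. w s i) has_vector_derivative w' i) (at t)"
  shows "((\<lambda>s. multiplier h N (w s) (w s))
          has_vector_derivative multiplier h N w' (w t) + multiplier h N (w t) w') (at t)"
proof -
  have tail: "((\<lambda>s. tail h N (w s) m) has_vector_derivative tail h N w' m) (at t)" for m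
    unfolding tail_def by (intro has_vector_derivative_mult_right has_vector_derivative_sum assms)
  have "((\<lambda>s. multiplier h N (w s) (w s)) has_vector_derivative
      \<i> * of_real h * (\<Sum>i\<le>N. of_real (node_mid h i) * tail_mid h N (w t) i * cnj (w' i)
        + of_real (node_mid h i) * tail_mid h N w' i * cnj (w t i))) (at t)"
    unfolding multiplier_def tail_mid_def
    by (intro has_vector_derivative_mult_right has_vector_derivative_sum has_vector_derivative_mult
        has_vector_derivative_cnj has_vector_derivative_divide has_vector_derivative_add
        has_vector_derivative_const tail assms)
  then show ?thesis
    by (rule has_vector_derivative_eq_rhs) (simp add: multiplier_def tail_mid_def sum.distrib distrib_left)
qed

lemma has_real_derivative_weighted_sum_sq:
  assumes "\<And>i. ((\<lambda>s. w s i) has_vector_derivative w' i) (at t)"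
  shows "((\<lambda>s. h * (\<Sum>i\<le>N. (cmod (w s i))\<^sup>2))
          has_real_derivative 2 * Re (of_real h * (\<Sum>i\<le>N. w' i * cnj (w t i)))) (at t)"
proof -
  have deriv: "((\<lambda>s. of_real h * (\<Sum>i\<le>N. w s i * cnj (w s i))) has_vector_derivative
      of_real h * (\<Sum>i\<le>N. w t i * cnj (w' i) + w' i * cnj (w t i))) (at t)"
    by (intro has_vector_derivative_mult_right has_vector_derivative_sum has_vector_derivative_mult
        has_vector_derivative_cnj assms)
  have eq: "h * (\<Sum>i\<le>N. (cmod (w s i))\<^sup>2) = Re (of_real h * (\<Sum>i\<le>N. w s i * cnj (w s i)))" for s
    by (simp only: complex_norm_square[symmetric] of_real_sum[symmetric] of_real_mult[symmetric]
        Re_complex_of_real)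
  show ?thesis
    unfolding eq
    by (rule DERIV_cong[OF has_field_derivative_Re[OF deriv]]) (simp add: sum.distrib algebra_simps)
qed

lemma energy_has_real_derivative:
  assumes "isvec N Y"
  shows "((\<lambda>s. energy N (Tsg k N s Y)) has_real_derivative - 2 * k * (cmod (Tsg k N t Y N))\<^sup>2) (at t)"
proof -
  have "((\<lambda>s. mesh N * (\<Sum>i\<le>N. (cmod (Dmul N (Tsg k N s Y) i))\<^sup>2)) has_real_derivative
      2 * Re (of_real (mesh N) * (\<Sum>i\<le>N. Dmul N (Aop k N (Tsg k N t Y)) i * cnj (Dmul N (Tsg k N t Y) i))))
      (at t)"
    by (intro has_real_derivative_weighted_sum_sq has_vector_derivative_Dmul Tsg_has_vector_derivative assms)
  then show ?thesis
    unfolding energy_def Aop_energy_dissipation by (simp add: mult.assoc)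
qed

lemma virial_has_real_derivative:
  assumes "isvec N Y"
  shows "((\<lambda>s. virial N (Tsg k N s Y)) has_real_derivative
          Re (multiplier (mesh N) N (Dmul N (Aop k N (Tsg k N t Y))) (Dmul N (Tsg k N t Y))
              + multiplier (mesh N) N (Dmul N (Tsg k N t Y)) (Dmul N (Aop k N (Tsg k N t Y))))) (at t)"
  unfolding virial_def
  by (intro has_field_derivative_Re has_vector_derivative_multiplier has_vector_derivative_Dmul
      Tsg_has_vector_derivative assms)

section \<open>Exponential decay\<close>

lemma lyapunov_exponential_decay:
  fixes E P a E' P' :: "real \<Rightarrow> real"
  assumes E': "\<And>s. (E has_real_derivative E' s) (at s)"
    and P': "\<And>s. (P has_real_derivative P' s) (at s)"
    and dissipation: "\<And>s. E' s \<le> - \<beta> * a s"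
    and virial: "\<And>s. E s - C * a s \<le> P' s"
    and a_nonneg: "\<And>s. 0 \<le> a s"
    and P_le_E: "\<And>s. \<bar>P s\<bar> \<le> E s"
    and \<epsilon>: "0 < \<epsilon>" "\<epsilon> \<le> 1/2" "\<epsilon> * C \<le> \<beta>"
    and t: "0 \<le> t"
  shows "E t \<le> 3 * exp (- (2 * \<epsilon> / 3) * t) * E 0"
proof -
  define \<omega> where "\<omega> = 2 * \<epsilon> / 3"
  define V where "V s = E s - \<epsilon> * P s" for s
  have V_bounds: "E s / 2 \<le> V s" "V s \<le> 3 / 2 * E s" for s
  proof -
    have "\<bar>\<epsilon> * P s\<bar> \<le> E s / 2"
      using mult_mono[OF \<epsilon>(2) P_le_E[of s]] \<epsilon>(1) by (simp add: abs_mult)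
    then show "E s / 2 \<le> V s" "V s \<le> 3 / 2 * E s"
      unfolding V_def by linarith+
  qed
  have nonpos: "exp (\<omega> * s) * (\<omega> * V s + (E' s - \<epsilon> * P' s)) \<le> 0" for s
  proof -
    have "E' s - \<epsilon> * P' s \<le> - \<beta> * a s - \<epsilon> * (E s - C * a s)"
      using dissipation[of s] mult_left_mono[OF virial[of s] less_imp_le[OF \<epsilon>(1)]] by linarith
    also have "\<dots> \<le> - \<epsilon> * E s"
      using mult_right_mono[OF \<epsilon>(3) a_nonneg[of s]] by (simp add: algebra_simps)
    also have "- \<epsilon> * E s \<le> - \<omega> * V s"
      using V_bounds(2)[of s] \<epsilon>(1) by (simp add: \<omega>_def)
    finally show ?thesis
      by (simp add: mult_nonneg_nonpos)
  qed
  have deriv: "((\<lambda>s. exp (\<omega> * s) * V s) has_real_derivative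
      exp (\<omega> * s) * (\<omega> * V s + (E' s - \<epsilon> * P' s))) (at s)" for s
    unfolding V_def by (auto intro!: derivative_eq_intros E' P' simp: algebra_simps)
  have "exp (\<omega> * t) * V t \<le> exp (\<omega> * 0) * V 0"
    by (rule DERIV_nonpos_imp_nonincreasing[OF t]) (use deriv nonpos in blast)
  then have "exp (\<omega> * t) * V t \<le> V 0"
    by simp
  moreover have "exp (\<omega> * t) * E t \<le> exp (\<omega> * t) * (2 * V t)"
    using V_bounds(1)[of t] by (intro mult_left_mono) simp_all
  ultimately have "exp (\<omega> * t) * E t \<le> 3 * E 0"
    using V_bounds(2)[of 0] by linarith
  then show ?thesis
    by (simp add: \<omega>_def exp_minus field_simps)
qed

lemma energy_Tsg_decay:
  assumes "isvec N Y" "0 < \<epsilon>" "\<epsilon> \<le> 1/2" "\<epsilon> * (k\<^sup>2 / 2 + 2) \<le> 2 * k" "0 \<le> t"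
  shows "energy N (Tsg k N t Y) \<le> 3 * exp (- (2 * \<epsilon> / 3) * t) * energy N Y"
proof -
  have "energy N (Tsg k N t Y) \<le> 3 * exp (- (2 * \<epsilon> / 3) * t) * energy N (Tsg k N 0 Y)"
  proof (rule lyapunov_exponential_decay[where a = "\<lambda>s. (cmod (Tsg k N s Y N))\<^sup>2" and \<beta> = "2 * k"])
    show "((\<lambda>s. energy N (Tsg k N s Y)) has_real_derivative - 2 * k * (cmod (Tsg k N s Y N))\<^sup>2) (at s)" for s
      by (rule energy_has_real_derivative[OF assms(1)])
    show "((\<lambda>s. virial N (Tsg k N s Y)) has_real_derivative
        Re (multiplier (mesh N) N (Dmul N (Aop k N (Tsg k N s Y))) (Dmul N (Tsg k N s Y))
            + multiplier (mesh N) N (Dmul N (Tsg k N s Y)) (Dmul N (Aop k N (Tsg k N s Y))))) (at s)" for s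
      by (rule virial_has_real_derivative[OF assms(1)])
  qed (use Aop_virial_lower_bound abs_virial_le_energy assms(2-5) in auto)
  then show ?thesis
    by (simp add: Tsg_0)
qed

lemma normY_Tsg_le:
  assumes "isvec N Y" "0 < \<epsilon>" "\<epsilon> \<le> 1/2" "\<epsilon> * (k\<^sup>2 / 2 + 2) \<le> 2 * k" "0 \<le> t"
  shows "normY N (Tsg k N t Y) \<le> sqrt 3 * exp (- (\<epsilon> / 3) * t) * normY N Y"
proof -
  have "exp (- (2 * \<epsilon> / 3) * t) = (exp (- (\<epsilon> / 3) * t))\<^sup>2"
    by (simp flip: exp_add add: power2_eq_square)
  then have "sqrt (3 * exp (- (2 * \<epsilon> / 3) * t) * energy N Y) = sqrt 3 * exp (- (\<epsilon> / 3) * t) * sqrt (energy N Y)"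
    by (simp add: real_sqrt_mult)
  then show ?thesis
    using energy_Tsg_decay[OF assms] unfolding normY_eq_sqrt_energy by (metis real_sqrt_le_mono)
qed

lemma opnormY_le:
  assumes "0 \<le> B" "\<And>Y. isvec N Y \<Longrightarrow> normY N (L Y) \<le> B * normY N Y"
  shows "opnormY N L \<le> B"
  unfolding opnormY_def
proof (rule cSup_least)
  have "isvec N (\<lambda>_. 0) \<and> normY N (\<lambda>_. 0) \<le> 1"
    by (simp add: isvec_def normY_def Dmul_def)
  then show "{normY N (L Y) |Y. isvec N Y \<and> normY N Y \<le> 1} \<noteq> {}"
    by blast
next
  fix x assume "x \<in> {normY N (L Y) |Y. isvec N Y \<and> normY N Y \<le> 1}"
  then obtain Y where "isvec N Y" "normY N Y \<le> 1" "x = normY N (L Y)"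
    by blast
  then show "x \<le> B"
    using assms(2)[of Y] mult_left_mono[of "normY N Y" 1 B] assms(1) by simp
qed

theorem theorem3:
  fixes k :: real
  assumes "k > 0"
  shows "\<exists>M>0. \<exists>\<omega>>0. \<forall>N::nat. N \<ge> 1 \<longrightarrow> (\<forall>t::real. t \<ge> 0 \<longrightarrow>
           opnormY N (Tsg k N t) \<le> M * exp (- \<omega> * t))"
proof -
  define \<epsilon> where "\<epsilon> = k / (k\<^sup>2 + 4)"
  have "0 < k\<^sup>2 + 4"
    by (simp add: add_nonneg_pos)
  then have \<epsilon>: "0 < \<epsilon>" "\<epsilon> \<le> 1/2" "\<epsilon> * (k\<^sup>2 / 2 + 2) \<le> 2 * k"
    using assms zero_le_power2[of "k - 1"] by (simp_all add: \<epsilon>_def field_simps power2_diff)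
  have "opnormY N (Tsg k N t) \<le> sqrt 3 * exp (- (\<epsilon> / 3) * t)" if "0 \<le> t" for N t
    using normY_Tsg_le[OF _ \<epsilon> that] by (intro opnormY_le) simp_all
  moreover have "0 < \<epsilon> / 3"
    using \<epsilon>(1) by simp
  ultimately show ?thesis
    by (intro exI[of _ "sqrt 3"] conjI exI[of _ "\<epsilon> / 3"]) (simp_all add: mult.commute)
qed

end
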